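(* Let $G$ be a finitely generated nilpotent group and $\Phi$ a uniformly continuous action of $G$ on a metric space $\Omega$; let $U,V\subset\Omega$. Assume there exists $g\in G$ such that the homeomorphism $f_g=\Phi(g,\cdot)$ is topologically Anosov with respect to $(U,V)$. Then the action $\Phi$ is topologically Anosov with respect to $(U,V)$.
   Context: Let $(\Omega,\mathrm{dist})$ be a metric space; $B(\delta,x)=\{y:\mathrm{dist}(x,y)<\delta\}$ and $B(\delta,U)=\bigcup_{x\in U}B(\delta,x)$. An action of a group $G$ is a map $\Phi:G\times\Omega\to\Omega$ such that each $f_g=\Phi(g,\cdot)$ is a homeomorphism of $\Omega$, $\Phi(e,x)=x$, and $\Phi(g_1g_2,x)=\Phi(g_1,\Phi(g_2,x))$. For a finitely generated $G$, the action is uniformly continuous if for some finite symmetric generating set $S$ (symmetric: $s\in S\Rightarrow s^{-1}\in S$) all maps $f_s$, $s\in S$, are uniformly continuous. Fix a finite symmetric generating set $S$ of $G$. For $d>0$, a family $\{y_g\}_{g\in G}\subset\Omega$ is a $d$-pseudotrajectory if $\mathrm{dist}(y_{sg},f_s(y_g))<d$ for all $s\in S$, $g\in G$. A uniformly continuous action has the shadowing property on $V\subset\Omega$ if for every $\varepsilon>0$ there is $d>0$ such that for every $d$-pseudotrajectory $\{y_g\}$ with all $y_g\in V$ there is $x_e\in\Omega$ with $\mathrm{dist}(y_g,f_g(x_e))<\varepsilon$ for all $g\in G$ (this property does not depend on the choice of $S$). The action is expansive on $U\subset\Omega$ if there is $\Delta>0$ such that whenever $x_1,x_2\in U$ satisfy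 $\Phi(g,x_1),\Phi(g,x_2)\in U$ and $\mathrm{dist}(\Phi(g,x_1),\Phi(g,x_2))<\Delta$ for all $g\in G$, then $x_1=x_2$. The action is topologically Anosov with respect to $(U,V)$ if (TA1) there is $\gamma>0$ with $B(\gamma,V)\subset U$, (TA2) it has the shadowing property on $V$, and (TA3) it is expansive on $U$. A homeomorphism $f$ of $\Omega$ is said to have any of these properties if the $\mathbb Z$-action $(k,x)\mapsto f^k(x)$ (with generating set $\{1,-1\}$) has it. A group $G$ is nilpotent of class $n$ if its lower central series $G_1=G$, $G_{i+1}=[G_i,G]$ satisfies $G_{n+1}=\{e\}$ and $G_n\neq\{e\}$; here $[g,h]=ghg^{-1}h^{-1}$. *)

theory Defs
  imports "HOL-Analysis.Analysis" "HOL-Algebra.Algebra"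
begin

definition commutator :: "('a, 'm) monoid_scheme \<Rightarrow> 'a \<Rightarrow> 'a \<Rightarrow> 'a" where
  "commutator G g h = g \<otimes>\<^bsub>G\<^esub> h \<otimes>\<^bsub>G\<^esub> inv\<^bsub>G\<^esub> g \<otimes>\<^bsub>G\<^esub> inv\<^bsub>G\<^esub> h"

text \<open>Lower central series, indexed from 0: lower_central G 0 = G = G_1 of the paper,
  lower_central G i = G_(i+1), with G_(i+1) = [G_i, G] generated by commutators.\<close>
fun lower_central :: "('a, 'm) monoid_scheme \<Rightarrow> nat \<Rightarrow> 'a set" where
  "lower_central G 0 = carrier G"
| "lower_central G (Suc i) =
     generate G {commutator G h g | h g. h \<in> lower_central G i \<and> g \<in> carrier G}"

definition nilpotent_group :: "('a, 'm) monoid_scheme \<Rightarrow> bool" where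
  "nilpotent_group G \<longleftrightarrow> group G \<and> (\<exists>n. lower_central G n = {\<one>\<^bsub>G\<^esub>})"

definition symmetric_gen_set :: "('a, 'm) monoid_scheme \<Rightarrow> 'a set \<Rightarrow> bool" where
  "symmetric_gen_set G S \<longleftrightarrow> finite S \<and> S \<subseteq> carrier G \<and>
     (\<forall>s\<in>S. inv\<^bsub>G\<^esub> s \<in> S) \<and> generate G S = carrier G"

definition finitely_generated :: "('a, 'm) monoid_scheme \<Rightarrow> bool" where
  "finitely_generated G \<longleftrightarrow> (\<exists>S. finite S \<and> S \<subseteq> carrier G \<and> generate G S = carrier G)"

definition group_action_homeo ::
    "('a, 'm) monoid_scheme \<Rightarrow> ('a \<Rightarrow> 'b::metric_space \<Rightarrow> 'b) \<Rightarrow> bool" where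
  "group_action_homeo G \<Phi> \<longleftrightarrow>
     (\<forall>g\<in>carrier G. \<exists>h. homeomorphism UNIV UNIV (\<Phi> g) h) \<and>
     (\<forall>x. \<Phi> \<one>\<^bsub>G\<^esub> x = x) \<and>
     (\<forall>g1\<in>carrier G. \<forall>g2\<in>carrier G. \<forall>x. \<Phi> (g1 \<otimes>\<^bsub>G\<^esub> g2) x = \<Phi> g1 (\<Phi> g2 x))"

definition unif_cont_action ::
    "('a, 'm) monoid_scheme \<Rightarrow> ('a \<Rightarrow> 'b::metric_space \<Rightarrow> 'b) \<Rightarrow> bool" where
  "unif_cont_action G \<Phi> \<longleftrightarrow> group_action_homeo G \<Phi> \<and>
     (\<exists>S. symmetric_gen_set G S \<and> (\<forall>s\<in>S. uniformly_continuous_on UNIV (\<Phi> s)))"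

definition pseudotrajectory ::
    "('a, 'm) monoid_scheme \<Rightarrow> ('a \<Rightarrow> 'b::metric_space \<Rightarrow> 'b) \<Rightarrow> 'a set \<Rightarrow> real \<Rightarrow> ('a \<Rightarrow> 'b) \<Rightarrow> bool" where
  "pseudotrajectory G \<Phi> S d y \<longleftrightarrow>
     (\<forall>s\<in>S. \<forall>g\<in>carrier G. dist (y (s \<otimes>\<^bsub>G\<^esub> g)) (\<Phi> s (y g)) < d)"

definition shadowing_on ::
    "('a, 'm) monoid_scheme \<Rightarrow> ('a \<Rightarrow> 'b::metric_space \<Rightarrow> 'b) \<Rightarrow> 'a set \<Rightarrow> 'b set \<Rightarrow> bool" where
  "shadowing_on G \<Phi> S V \<longleftrightarrow>
     (\<forall>\<epsilon>>0. \<exists>d>0. \<forall>y. pseudotrajectory G \<Phi> S d y \<and> (\<forall>g\<in>carrier G. y g \<in> V) \<longrightarrow>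
        (\<exists>x. \<forall>g\<in>carrier G. dist (y g) (\<Phi> g x) < \<epsilon>))"

definition expansive_on ::
    "('a, 'm) monoid_scheme \<Rightarrow> ('a \<Rightarrow> 'b::metric_space \<Rightarrow> 'b) \<Rightarrow> 'b set \<Rightarrow> bool" where
  "expansive_on G \<Phi> U \<longleftrightarrow>
     (\<exists>\<Delta>>0. \<forall>x1\<in>U. \<forall>x2\<in>U.
        (\<forall>g\<in>carrier G. \<Phi> g x1 \<in> U \<and> \<Phi> g x2 \<in> U \<and> dist (\<Phi> g x1) (\<Phi> g x2) < \<Delta>)
        \<longrightarrow> x1 = x2)"

definition top_anosov ::
    "('a, 'm) monoid_scheme \<Rightarrow> ('a \<Rightarrow> 'b::metric_space \<Rightarrow> 'b) \<Rightarrow> 'a set \<Rightarrow> 'b set \<Rightarrow> 'b set \<Rightarrow> bool" where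
  "top_anosov G \<Phi> S U V \<longleftrightarrow>
     (\<exists>\<gamma>>0. (\<Union>x\<in>V. ball x \<gamma>) \<subseteq> U) \<and> shadowing_on G \<Phi> S V \<and> expansive_on G \<Phi> U"

definition int_iter :: "('b \<Rightarrow> 'b) \<Rightarrow> int \<Rightarrow> 'b \<Rightarrow> 'b" where
  "int_iter f k = (if 0 \<le> k then f ^^ nat k else (Hilbert_Choice.inv f) ^^ nat (- k))"

definition top_anosov_homeo :: "('b::metric_space \<Rightarrow> 'b) \<Rightarrow> 'b set \<Rightarrow> 'b set \<Rightarrow> bool" where
  "top_anosov_homeo f U V \<longleftrightarrow> top_anosov integer_group (int_iter f) {1, -1} U V"

end

theory Submission
  imports Defs
begin

text \<open>Shadow each g-orbit \<open>k \<mapsto> y (g\<^sup>k h)\<close> of a G-pseudotrajectory y by a point \<open>\<xi> h\<close>, which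
  expansivity of \<open>f\<^sub>g\<close> makes unique. The elements a with \<open>\<Phi> a (\<xi> h) = \<xi> (a h)\<close> for all h form a
  subgroup Q containing g, and Q contains a as soon as it contains the conjugate \<open>a\<^sup>-\<^sup>1 g a\<close>, since
  then \<open>\<Phi> a (\<xi> h)\<close> also shadows the g-orbit through a h. As \<open>a\<^sup>-\<^sup>1 g a = [a\<^sup>-\<^sup>1, g] g\<close> and the
  commutator lies one step deeper in the lower central series, nilpotency lets this step climb
  from the trivial group back up to the generators, so Q = G and \<open>\<xi> 1\<close> shadows y.\<close>

definition step_close ::
    "('a, 'm) monoid_scheme \<Rightarrow> ('a \<Rightarrow> 'b::metric_space \<Rightarrow> 'b) \<Rightarrow> 'a \<Rightarrow> real \<Rightarrow> ('a \<Rightarrow> 'b) \<Rightarrow> bool" where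
  "step_close G \<Phi> a \<eta> y \<longleftrightarrow> (\<forall>h\<in>carrier G. dist (y (a \<otimes>\<^bsub>G\<^esub> h)) (\<Phi> a (y h)) < \<eta>)"

definition shadows ::
    "('a, 'm) monoid_scheme \<Rightarrow> ('a \<Rightarrow> 'b::metric_space \<Rightarrow> 'b) \<Rightarrow> real \<Rightarrow> ('a \<Rightarrow> 'b) \<Rightarrow> 'b \<Rightarrow> bool" where
  "shadows G \<Phi> r y x \<longleftrightarrow> (\<forall>k\<in>carrier G. dist (y k) (\<Phi> k x) < r)"

definition conjugation_test_set :: "('a, 'm) monoid_scheme \<Rightarrow> 'a \<Rightarrow> 'a set \<Rightarrow> bool" where
  "conjugation_test_set G g F \<longleftrightarrow> F \<subseteq> carrier G \<and> (\<forall>Q. subgroup Q G \<longrightarrow> g \<in> Q \<longrightarrow>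
     (\<forall>a\<in>F. inv\<^bsub>G\<^esub> a \<otimes>\<^bsub>G\<^esub> g \<otimes>\<^bsub>G\<^esub> a \<in> Q \<longrightarrow> a \<in> Q) \<longrightarrow> Q = carrier G)"

lemma pseudotrajectory_iff_step_close:
  "pseudotrajectory G \<Phi> S d y \<longleftrightarrow> (\<forall>s\<in>S. step_close G \<Phi> s d y)"
  by (simp add: pseudotrajectory_def step_close_def)

lemma shadowing_on_iff_shadows:
  "shadowing_on G \<Phi> S V \<longleftrightarrow> (\<forall>\<epsilon>>0. \<exists>d>0. \<forall>y. pseudotrajectory G \<Phi> S d y \<and> (\<forall>g\<in>carrier G. y g \<in> V)
     \<longrightarrow> (\<exists>x. shadows G \<Phi> \<epsilon> y x))"
  by (simp add: shadowing_on_def shadows_def)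

lemma pseudotrajectory_mono:
  "pseudotrajectory G \<Phi> S d y \<Longrightarrow> d \<le> d' \<Longrightarrow> pseudotrajectory G \<Phi> S d' y"
  unfolding pseudotrajectory_def by (meson less_le_trans)

lemma step_close_mono: "step_close G \<Phi> a \<eta> y \<Longrightarrow> \<eta> \<le> \<eta>' \<Longrightarrow> step_close G \<Phi> a \<eta>' y"
  unfolding step_close_def by (meson less_le_trans)

lemma shadows_mono: "shadows G \<Phi> r y x \<Longrightarrow> r \<le> r' \<Longrightarrow> shadows G \<Phi> r' y x"
  unfolding shadows_def by (meson less_le_trans)

lemma uniformly_continuous_on_subset:
  fixes f :: "'a::metric_space \<Rightarrow> 'b::metric_space"
  shows "uniformly_continuous_on B f \<Longrightarrow> A \<subseteq> B \<Longrightarrow> uniformly_continuous_on A f"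
  unfolding uniformly_continuous_on_def by (meson subsetD)

lemma finite_common_pos_bound:
  fixes P :: "'x \<Rightarrow> real \<Rightarrow> bool"
  assumes "finite F" and "\<And>a. a \<in> F \<Longrightarrow> \<exists>\<delta>>0. P a \<delta>"
    and "\<And>a \<delta> \<delta>'. P a \<delta> \<Longrightarrow> 0 < \<delta>' \<Longrightarrow> \<delta>' \<le> \<delta> \<Longrightarrow> P a \<delta>'"
  shows "\<exists>\<delta>>0. \<forall>a\<in>F. P a \<delta>"
  using assms(1,2)
proof (induction F rule: finite_induct)
  case empty
  show ?case by (auto intro: exI[of _ 1])
next
  case (insert x F)
  then obtain d1 d2 where "d1 > 0" "\<forall>a\<in>F. P a d1" "d2 > 0" "P x d2" by blast
  then show ?case using assms(3) by (intro exI[of _ "min d1 d2"]) auto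
qed

lemma expansive_on_shadows_unique:
  assumes "expansive_on H \<phi> U" and "(\<Union>x\<in>V. ball x \<gamma>) \<subseteq> U" and "\<gamma> > 0"
    and "\<one>\<^bsub>H\<^esub> \<in> carrier H" and "\<And>x. \<phi> \<one>\<^bsub>H\<^esub> x = x"
  obtains r where "r > 0"
    "\<And>z p q. \<forall>k\<in>carrier H. z k \<in> V \<Longrightarrow> shadows H \<phi> r z p \<Longrightarrow> shadows H \<phi> r z q \<Longrightarrow> p = q"
proof -
  obtain \<Delta> where "\<Delta> > 0" and exp: "\<forall>x1\<in>U. \<forall>x2\<in>U.
      (\<forall>k\<in>carrier H. \<phi> k x1 \<in> U \<and> \<phi> k x2 \<in> U \<and> dist (\<phi> k x1) (\<phi> k x2) < \<Delta>) \<longrightarrow> x1 = x2"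
    using assms(1) by (auto simp: expansive_on_def)
  define r where "r = min \<gamma> (\<Delta> / 2)"
  have "p = q" if zV: "\<forall>k\<in>carrier H. z k \<in> V"
    and p: "shadows H \<phi> r z p" and q: "shadows H \<phi> r z q" for z p q
  proof -
    have near: "\<phi> k p \<in> U \<and> \<phi> k q \<in> U \<and> dist (\<phi> k p) (\<phi> k q) < \<Delta>" if k: "k \<in> carrier H" for k
    proof -
      have "dist (z k) (\<phi> k p) < r" "dist (z k) (\<phi> k q) < r"
        using p q k by (auto simp: shadows_def)
      moreover have "dist (\<phi> k p) (\<phi> k q) \<le> dist (z k) (\<phi> k p) + dist (z k) (\<phi> k q)"
        by (simp add: dist_triangle3)
      ultimately show ?thesis
        using zV k assms(2) by (fastforce simp: r_def)
    qed
    show "p = q" using exp near[OF assms(4)] near by (simp add: assms(5))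
  qed
  moreover have "r > 0" using \<open>\<gamma> > 0\<close> \<open>\<Delta> > 0\<close> by (simp add: r_def)
  ultimately show ?thesis using that by blast
qed

context group
begin

lemma conj_int_pow:
  assumes "a \<in> carrier G" "g \<in> carrier G"
  shows "(inv a \<otimes> g \<otimes> a) [^] (k::int) = inv a \<otimes> g [^] k \<otimes> a"
proof -
  have cancel: "a \<otimes> (inv a \<otimes> y) = y" if "y \<in> carrier G" for y
    using assms that by (simp add: m_assoc[symmetric])
  have "(\<lambda>x. inv a \<otimes> x \<otimes> a) \<in> hom G G"
    unfolding hom_def using assms by (auto simp: m_assoc cancel)
  from hom_int_pow[OF this assms(2) is_group is_group] show ?thesis by simp
qed

lemma commutator_inv_mult: "a \<in> carrier G \<Longrightarrow> g \<in> carrier G \<Longrightarrow>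
   commutator G (inv a) g \<otimes> g = inv a \<otimes> g \<otimes> a"
  by (simp add: commutator_def m_assoc)

lemma lower_central_subgroup: "subgroup (lower_central G i) G"
proof (induction i)
  case 0
  show ?case by (simp add: subgroup_self)
next
  case (Suc i)
  then have "{commutator G h g |h g. h \<in> lower_central G i \<and> g \<in> carrier G} \<subseteq> carrier G"
    using subgroup.subset by (fastforce simp: commutator_def)
  then show ?case by (simp add: generate_is_subgroup)
qed

lemma commutator_lower_central:
  "a \<in> lower_central G i \<Longrightarrow> g \<in> carrier G \<Longrightarrow> commutator G a g \<in> lower_central G (Suc i)"
  by (auto intro: generate.incl)

text \<open>The test set consists of the iterates \<open>\<psi>\<^sup>j s\<close>, \<open>j \<le> n\<close>, of \<open>\<psi> a = [a\<^sup>-\<^sup>1, g]\<close> on the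
  generators: \<open>\<psi>\<^sup>j s\<close> lies in the j-th term of the lower central series, and
  \<open>\<psi> a \<otimes> g = a\<^sup>-\<^sup>1 g a\<close> lets the test pass from \<open>\<psi>\<^sup>j\<^sup>+\<^sup>1 s\<close> back to \<open>\<psi>\<^sup>j s\<close>.\<close>
lemma nilpotent_ex_conjugation_test_set:
  assumes "lower_central G n = {\<one>}" and "finite S" "S \<subseteq> carrier G" "generate G S = carrier G"
    and g: "g \<in> carrier G"
  shows "\<exists>F. finite F \<and> conjugation_test_set G g F"
proof -
  define \<psi> where "\<psi> a = commutator G (inv a) g" for a
  define F where "F = {(\<psi> ^^ j) s | s j. s \<in> S \<and> j \<le> n}"
  have lc: "(\<psi> ^^ j) s \<in> lower_central G j" if "s \<in> carrier G" for s j
  proof (induction j)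
    case 0
    show ?case using that by simp
  next
    case (Suc j)
    then show ?case
      using commutator_lower_central g subgroup.m_inv_closed[OF lower_central_subgroup]
      by (simp add: \<psi>_def)
  qed
  have "(\<psi> ^^ j) s \<in> carrier G" if "s \<in> carrier G" for s j
    using lc[OF that] subgroup.subset[OF lower_central_subgroup] by blast
  then have F_carrier: "F \<subseteq> carrier G" using assms(3) by (auto simp: F_def)
  have "finite F"
  proof -
    have "F = (\<lambda>(s, j). (\<psi> ^^ j) s) ` (S \<times> {..n})" by (auto simp: F_def)
    then show ?thesis using assms(2) by simp
  qed
  moreover have "Q = carrier G"
    if Q: "subgroup Q G" "g \<in> Q" and test: "\<forall>a\<in>F. inv a \<otimes> g \<otimes> a \<in> Q \<longrightarrow> a \<in> Q" for Q
  proof -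
    have "\<forall>s\<in>S. (\<psi> ^^ j) s \<in> Q" if "j \<le> n" for j
      using that
    proof (induction j rule: inc_induct)
      case base
      show ?case
      proof
        fix s assume "s \<in> S"
        then have "(\<psi> ^^ n) s = \<one>" using lc[of s n] assms(1,3) by auto
        then show "(\<psi> ^^ n) s \<in> Q" using subgroup.one_closed[OF Q(1)] by simp
      qed
    next
      case (step j)
      show ?case
      proof
        fix s assume s: "s \<in> S"
        define a where "a = (\<psi> ^^ j) s"
        have "j \<le> n" using step.hyps by simp
        with s have "a \<in> F" unfolding F_def a_def by blast
        then have a: "a \<in> carrier G" using F_carrier by blast
        have "\<psi> a \<otimes> g \<in> Q" using step.IH s Q subgroup.m_closed by (fastforce simp: a_def)
        then have "inv a \<otimes> g \<otimes> a \<in> Q" using commutator_inv_mult[OF a g] by (simp add: \<psi>_def)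
        with test \<open>a \<in> F\<close> show "(\<psi> ^^ j) s \<in> Q" by (simp add: a_def)
      qed
    qed
    then have "S \<subseteq> Q" by fastforce
    then show ?thesis using generate_subgroup_incl[OF _ Q(1)] assms(4) subgroup.subset[OF Q(1)]
      by blast
  qed
  ultimately show ?thesis using F_carrier by (auto simp: conjugation_test_set_def)
qed

end

locale homeo_action = group G for G :: "('a, 'm) monoid_scheme" (structure) +
  fixes \<Phi> :: "'a \<Rightarrow> 'b::metric_space \<Rightarrow> 'b"
  assumes action: "group_action_homeo G \<Phi>"
begin

lemma act_one [simp]: "\<Phi> \<one> x = x"
  using action by (simp add: group_action_homeo_def)

lemma act_mult: "a \<in> carrier G \<Longrightarrow> b \<in> carrier G \<Longrightarrow> \<Phi> (a \<otimes> b) x = \<Phi> a (\<Phi> b x)"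
  using action by (simp add: group_action_homeo_def)

lemma act_inv_cancel [simp]: "a \<in> carrier G \<Longrightarrow> \<Phi> (inv a) (\<Phi> a x) = x"
  by (simp flip: act_mult)

lemma act_cancel_inv [simp]: "a \<in> carrier G \<Longrightarrow> \<Phi> a (\<Phi> (inv a) x) = x"
  by (simp flip: act_mult)

lemma act_nat_pow: "a \<in> carrier G \<Longrightarrow> \<Phi> a ^^ n = \<Phi> (a [^] n)"
  by (induction n) (simp_all add: fun_eq_iff act_mult funpow_Suc_right del: funpow.simps)

lemma int_iter_act:
  assumes a: "a \<in> carrier G"
  shows "int_iter (\<Phi> a) = (\<lambda>k. \<Phi> (a [^] k))"
proof
  fix k :: int
  have inv_act: "Hilbert_Choice.inv (\<Phi> a) = \<Phi> (inv a)"
    using a by (intro inv_unique_comp) (auto simp: fun_eq_iff)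
  show "int_iter (\<Phi> a) k = \<Phi> (a [^] k)"
  proof (cases "k < 0")
    case True
    then have "a [^] k = inv (a [^] nat (- k))" using int_pow_neg_int[OF a, of "nat (- k)"] by simp
    also have "\<dots> = inv a [^] nat (- k)" using a by (simp add: nat_pow_inv)
    finally show ?thesis using True a by (simp add: int_iter_def inv_act act_nat_pow)
  next
    case False
    then have "a [^] k = a [^] nat k" by (simp add: pow_nat)
    then show ?thesis using False a by (simp add: int_iter_def act_nat_pow)
  qed
qed

lemma uniformly_continuous_act:
  assumes S: "symmetric_gen_set G S" and uc: "\<forall>s\<in>S. uniformly_continuous_on UNIV (\<Phi> s)"
    and a: "a \<in> carrier G"
  shows "uniformly_continuous_on UNIV (\<Phi> a)"
proof -
  have "a \<in> generate G S" using S a by (simp add: symmetric_gen_set_def)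
  then show ?thesis
  proof (induction rule: generate.induct)
    case one
    show ?case by (simp add: uniformly_continuous_on_id)
  next
    case (incl s)
    then show ?case using uc by blast
  next
    case (inv s)
    then show ?case using uc S by (simp add: symmetric_gen_set_def)
  next
    case (eng h1 h2)
    then have "h1 \<in> carrier G" "h2 \<in> carrier G"
      using S generate_in_carrier by (auto simp: symmetric_gen_set_def)
    then have "\<Phi> (h1 \<otimes> h2) = (\<lambda>x. \<Phi> h1 (\<Phi> h2 x))" by (simp add: fun_eq_iff act_mult)
    then show ?case
      using uniformly_continuous_on_compose[OF eng.IH(2) uniformly_continuous_on_subset[OF eng.IH(1)]]
      by simp
  qed
qed

lemma pseudotrajectory_step_close:
  assumes S: "symmetric_gen_set G S"
    and uc: "\<And>b. b \<in> carrier G \<Longrightarrow> uniformly_continuous_on UNIV (\<Phi> b)"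
    and a: "a \<in> carrier G" and "\<eta> > 0"
  shows "\<exists>\<delta>>0. \<forall>y. pseudotrajectory G \<Phi> S \<delta> y \<longrightarrow> step_close G \<Phi> a \<eta> y"
proof -
  have "a \<in> generate G S" using S a by (simp add: symmetric_gen_set_def)
  then show ?thesis using \<open>\<eta> > 0\<close>
  proof (induction arbitrary: \<eta> rule: generate.induct)
    case one
    then show ?case by (auto simp: step_close_def intro: exI[of _ 1])
  next
    case (incl s)
    then show ?case by (auto simp: pseudotrajectory_iff_step_close)
  next
    case (inv s)
    then have "inv s \<in> S" using S by (simp add: symmetric_gen_set_def)
    then show ?case using inv.prems by (auto simp: pseudotrajectory_iff_step_close)
  next
    case (eng h1 h2)
    then have h: "h1 \<in> carrier G" "h2 \<in> carrier G"
      using S generate_in_carrier by (auto simp: symmetric_gen_set_def)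
    obtain \<delta>1 where "\<delta>1 > 0" and \<delta>1: "\<And>y. pseudotrajectory G \<Phi> S \<delta>1 y \<Longrightarrow> step_close G \<Phi> h1 (\<eta>/2) y"
      using eng.IH(1) eng.prems by (meson half_gt_zero)
    obtain \<rho> where "\<rho> > 0" and \<rho>: "\<And>x x'. dist x' x < \<rho> \<Longrightarrow> dist (\<Phi> h1 x') (\<Phi> h1 x) < \<eta>/2"
      using uc[OF h(1)] eng.prems unfolding uniformly_continuous_on_def by (meson half_gt_zero UNIV_I)
    obtain \<delta>2 where "\<delta>2 > 0" and \<delta>2: "\<And>y. pseudotrajectory G \<Phi> S \<delta>2 y \<Longrightarrow> step_close G \<Phi> h2 \<rho> y"
      using eng.IH(2) \<open>\<rho> > 0\<close> by blast
    have "step_close G \<Phi> (h1 \<otimes> h2) \<eta> y" if y: "pseudotrajectory G \<Phi> S (min \<delta>1 \<delta>2) y" for y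
      unfolding step_close_def
    proof
      fix w assume w: "w \<in> carrier G"
      have "step_close G \<Phi> h1 (\<eta>/2) y" "step_close G \<Phi> h2 \<rho> y"
        using \<delta>1 \<delta>2 pseudotrajectory_mono[OF y] by simp_all
      then have "dist (y (h1 \<otimes> (h2 \<otimes> w))) (\<Phi> h1 (y (h2 \<otimes> w))) < \<eta>/2"
        and "dist (\<Phi> h1 (y (h2 \<otimes> w))) (\<Phi> h1 (\<Phi> h2 (y w))) < \<eta>/2"
        using h w \<rho> by (simp_all add: step_close_def)
      then have "dist (y (h1 \<otimes> (h2 \<otimes> w))) (\<Phi> h1 (\<Phi> h2 (y w))) < \<eta>"
        using dist_triangle[of "y (h1 \<otimes> (h2 \<otimes> w))" "\<Phi> h1 (\<Phi> h2 (y w))" "\<Phi> h1 (y (h2 \<otimes> w))"]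
        by linarith
      then show "dist (y (h1 \<otimes> h2 \<otimes> w)) (\<Phi> (h1 \<otimes> h2) (y w)) < \<eta>"
        using h w by (simp add: m_assoc act_mult)
    qed
    then show ?case using \<open>\<delta>1 > 0\<close> \<open>\<delta>2 > 0\<close> by (intro exI[of _ "min \<delta>1 \<delta>2"]) auto
  qed
qed

lemma pseudotrajectory_step_close_finite:
  assumes "symmetric_gen_set G S"
    and "\<And>b. b \<in> carrier G \<Longrightarrow> uniformly_continuous_on UNIV (\<Phi> b)"
    and "finite F" "F \<subseteq> carrier G" "\<eta> > 0"
  shows "\<exists>\<delta>>0. \<forall>y. pseudotrajectory G \<Phi> S \<delta> y \<longrightarrow> (\<forall>a\<in>F. step_close G \<Phi> a \<eta> y)"
proof -
  have "\<exists>\<delta>>0. \<forall>a\<in>F. \<forall>y. pseudotrajectory G \<Phi> S \<delta> y \<longrightarrow> step_close G \<Phi> a \<eta> y"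
  proof (rule finite_common_pos_bound[OF \<open>finite F\<close>])
    show "\<exists>\<delta>>0. \<forall>y. pseudotrajectory G \<Phi> S \<delta> y \<longrightarrow> step_close G \<Phi> a \<eta> y" if "a \<in> F" for a
      using pseudotrajectory_step_close[OF assms(1,2)] that assms(4,5) by blast
  qed (meson pseudotrajectory_mono less_imp_le)
  then show ?thesis by blast
qed

lemma cyclic_pseudotrajectory:
  assumes g: "g \<in> carrier G" and h: "h \<in> carrier G"
    and "step_close G \<Phi> g d y" "step_close G \<Phi> (inv g) d y"
  shows "pseudotrajectory integer_group (\<lambda>k. \<Phi> (g [^] k)) {1, -1} d (\<lambda>k. y (g [^] k \<otimes> h))"
  unfolding pseudotrajectory_def
proof (intro ballI)
  fix s k :: int assume "s \<in> {1, -1}"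
  then have "g [^] s \<in> {g, inv g}" using g int_pow_neg[OF g, of 1] by auto
  moreover have "g [^] (s + k) \<otimes> h = g [^] s \<otimes> (g [^] k \<otimes> h)"
    using g h by (simp add: int_pow_mult m_assoc)
  ultimately show "dist (y (g [^] (s \<otimes>\<^bsub>integer_group\<^esub> k) \<otimes> h)) (\<Phi> (g [^] s) (y (g [^] k \<otimes> h))) < d"
    using assms by (auto simp: step_close_def)
qed

lemma equivariance_subgroup: "subgroup {a \<in> carrier G. \<forall>h\<in>carrier G. \<Phi> a (\<xi> h) = \<xi> (a \<otimes> h)} G"
proof (rule subgroupI)
  show "{a \<in> carrier G. \<forall>h\<in>carrier G. \<Phi> a (\<xi> h) = \<xi> (a \<otimes> h)} \<noteq> {}" by force
next
  fix a assume a: "a \<in> {a \<in> carrier G. \<forall>h\<in>carrier G. \<Phi> a (\<xi> h) = \<xi> (a \<otimes> h)}"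
  have "\<Phi> (inv a) (\<xi> h) = \<xi> (inv a \<otimes> h)" if "h \<in> carrier G" for h
    using a that act_inv_cancel[of a "\<xi> (inv a \<otimes> h)"] by (auto simp: m_assoc[symmetric])
  with a show "inv a \<in> {a \<in> carrier G. \<forall>h\<in>carrier G. \<Phi> a (\<xi> h) = \<xi> (a \<otimes> h)}" by simp
qed (auto simp: act_mult m_assoc)

lemma shadows_orbit_shift:
  assumes g: "g \<in> carrier G" and h: "h \<in> carrier G"
    and "shadows integer_group (\<lambda>k. \<Phi> (g [^] k)) r (\<lambda>k. y (g [^] k \<otimes> h)) x"
  shows "shadows integer_group (\<lambda>k. \<Phi> (g [^] k)) r (\<lambda>k. y (g [^] k \<otimes> (g \<otimes> h))) (\<Phi> g x)"
  unfolding shadows_def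
proof
  fix k :: int
  have "g [^] k \<otimes> (g \<otimes> h) = g [^] (k + 1) \<otimes> h" "\<Phi> (g [^] k) (\<Phi> g x) = \<Phi> (g [^] (k + 1)) x"
    using g h by (simp_all add: int_pow_mult m_assoc act_mult)
  then show "dist (y (g [^] k \<otimes> (g \<otimes> h))) (\<Phi> (g [^] k) (\<Phi> g x)) < r"
    using assms(3) by (simp add: shadows_def)
qed

text \<open>Since \<open>g\<^sup>k a = a t\<^sup>k\<close> for the conjugate \<open>t = a\<^sup>-\<^sup>1 g a\<close>, the g-orbit through a h is the
  a-translate of the t-orbit through h.\<close>
lemma shadows_orbit_conjugate:
  assumes a: "a \<in> carrier G" and g: "g \<in> carrier G" and h: "h \<in> carrier G"
    and \<xi>_equiv: "\<And>k::int. \<Phi> ((inv a \<otimes> g \<otimes> a) [^] k) x = \<xi> ((inv a \<otimes> g \<otimes> a) [^] k \<otimes> h)"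
    and \<xi>_close: "\<And>w. w \<in> carrier G \<Longrightarrow> dist (y w) (\<xi> w) < \<rho>"
    and y_step: "step_close G \<Phi> a c y"
    and a_cont: "\<And>x x'. dist x' x < \<rho> \<Longrightarrow> dist (\<Phi> a x') (\<Phi> a x) < c"
  shows "shadows integer_group (\<lambda>k. \<Phi> (g [^] k)) (2 * c) (\<lambda>k. y (g [^] k \<otimes> (a \<otimes> h))) (\<Phi> a x)"
  unfolding shadows_def
proof
  fix k :: int
  define t where "t = inv a \<otimes> g \<otimes> a"
  define w where "w = t [^] k \<otimes> h"
  have w: "w \<in> carrier G" using a g h by (simp add: w_def t_def)
  have conj: "g [^] k \<otimes> a = a \<otimes> t [^] k"
    using a g by (simp add: t_def conj_int_pow m_assoc[symmetric])
  then have orbit: "g [^] k \<otimes> (a \<otimes> h) = a \<otimes> w"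
    using a g h by (simp add: w_def t_def m_assoc[symmetric])
  have "\<Phi> (g [^] k) (\<Phi> a x) = \<Phi> (a \<otimes> t [^] k) x"
    using a g by (simp add: act_mult flip: conj)
  also have "\<dots> = \<Phi> a (\<xi> w)"
    using a g \<xi>_equiv by (simp add: act_mult w_def t_def)
  finally have act_orbit: "\<Phi> (g [^] k) (\<Phi> a x) = \<Phi> a (\<xi> w)" .
  moreover have "dist (y (a \<otimes> w)) (\<Phi> a (y w)) < c"
    using y_step w by (simp add: step_close_def)
  moreover have "dist (\<Phi> a (y w)) (\<Phi> a (\<xi> w)) < c"
    using a_cont \<xi>_close[OF w] by blast
  ultimately show "dist (y (g [^] k \<otimes> (a \<otimes> h))) (\<Phi> (g [^] k) (\<Phi> a x)) < 2 * c"
    unfolding orbit act_orbit using dist_triangle[of "y (a \<otimes> w)" "\<Phi> a (\<xi> w)" "\<Phi> a (y w)"] by linarith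
qed

lemma expansive_on_if_cyclic:
  assumes g: "g \<in> carrier G" and "expansive_on integer_group (\<lambda>k. \<Phi> (g [^] k)) U"
  shows "expansive_on G \<Phi> U"
proof -
  obtain \<Delta> where "\<Delta> > 0" and exp: "\<forall>x1\<in>U. \<forall>x2\<in>U. (\<forall>k::int. \<Phi> (g [^] k) x1 \<in> U \<and>
      \<Phi> (g [^] k) x2 \<in> U \<and> dist (\<Phi> (g [^] k) x1) (\<Phi> (g [^] k) x2) < \<Delta>) \<longrightarrow> x1 = x2"
    using assms(2) by (auto simp: expansive_on_def)
  have "x1 = x2" if "x1 \<in> U" "x2 \<in> U"
    and "\<forall>h\<in>carrier G. \<Phi> h x1 \<in> U \<and> \<Phi> h x2 \<in> U \<and> dist (\<Phi> h x1) (\<Phi> h x2) < \<Delta>" for x1 x2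
    using exp that g by simp
  with \<open>\<Delta> > 0\<close> show ?thesis unfolding expansive_on_def by blast
qed

lemma shadows_from_orbit_shadows:
  assumes g: "g \<in> carrier G" and F: "conjugation_test_set G g F"
    and "\<epsilon> \<le> r"
    and unique: "\<And>h p q. h \<in> carrier G
      \<Longrightarrow> shadows integer_group (\<lambda>k. \<Phi> (g [^] k)) r (\<lambda>k. y (g [^] k \<otimes> h)) p
      \<Longrightarrow> shadows integer_group (\<lambda>k. \<Phi> (g [^] k)) r (\<lambda>k. y (g [^] k \<otimes> h)) q \<Longrightarrow> p = q"
    and orbit_shadowed: "\<And>h. h \<in> carrier G
      \<Longrightarrow> \<exists>x. shadows integer_group (\<lambda>k. \<Phi> (g [^] k)) \<epsilon> (\<lambda>k. y (g [^] k \<otimes> h)) x"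
    and F_step: "\<And>a. a \<in> F \<Longrightarrow> step_close G \<Phi> a (r/2) y"
    and F_cont: "\<And>a x x'. a \<in> F \<Longrightarrow> dist x' x < \<epsilon> \<Longrightarrow> dist (\<Phi> a x') (\<Phi> a x) < r/2"
  shows "\<exists>x. shadows G \<Phi> \<epsilon> y x"
proof -
  let ?orb = "\<lambda>h (k::int). y (g [^] k \<otimes> h)"
  let ?sh = "shadows integer_group (\<lambda>k. \<Phi> (g [^] k))"
  obtain \<xi> where \<xi>: "\<And>h. h \<in> carrier G \<Longrightarrow> ?sh \<epsilon> (?orb h) (\<xi> h)"
    using orbit_shadowed by metis
  then have \<xi>_r: "?sh r (?orb h) (\<xi> h)" if "h \<in> carrier G" for h
    using that \<open>\<epsilon> \<le> r\<close> shadows_mono by blast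
  have \<xi>_close: "dist (y h) (\<xi> h) < \<epsilon>" if "h \<in> carrier G" for h
  proof -
    have "dist (?orb h 0) (\<Phi> (g [^] (0::int)) (\<xi> h)) < \<epsilon>"
      by (rule bspec[OF \<xi>[OF that, unfolded shadows_def]]) simp
    with that show ?thesis by simp
  qed
  define Q where "Q = {a \<in> carrier G. \<forall>h\<in>carrier G. \<Phi> a (\<xi> h) = \<xi> (a \<otimes> h)}"
  have Q: "subgroup Q G" unfolding Q_def by (rule equivariance_subgroup)
  have "\<Phi> g (\<xi> h) = \<xi> (g \<otimes> h)" if h: "h \<in> carrier G" for h
    using unique[OF _ shadows_orbit_shift[OF g h \<xi>_r[OF h]] \<xi>_r] g h by simp
  then have "g \<in> Q" using g by (simp add: Q_def)
  moreover have "a \<in> Q" if a: "a \<in> F" and t: "inv a \<otimes> g \<otimes> a \<in> Q" for a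
  proof -
    have "a \<in> carrier G" using a F by (auto simp: conjugation_test_set_def)
    have "\<Phi> a (\<xi> h) = \<xi> (a \<otimes> h)" if h: "h \<in> carrier G" for h
    proof (rule unique)
      have "\<Phi> ((inv a \<otimes> g \<otimes> a) [^] k) (\<xi> h) = \<xi> ((inv a \<otimes> g \<otimes> a) [^] k \<otimes> h)" for k :: int
        using subgroup_int_pow_closed[OF Q t] h by (simp add: Q_def)
      from shadows_orbit_conjugate[OF \<open>a \<in> carrier G\<close> g h this \<xi>_close F_step[OF a] F_cont[OF a]]
      show "?sh r (?orb (a \<otimes> h)) (\<Phi> a (\<xi> h))" by simp
      show "?sh r (?orb (a \<otimes> h)) (\<xi> (a \<otimes> h))" using \<xi>_r \<open>a \<in> carrier G\<close> h by simp
    qed (use \<open>a \<in> carrier G\<close> h in simp)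
    then show ?thesis using \<open>a \<in> carrier G\<close> by (simp add: Q_def)
  qed
  ultimately have "Q = carrier G" using F Q unfolding conjugation_test_set_def by blast
  have "\<Phi> h (\<xi> \<one>) = \<xi> h" if "h \<in> carrier G" for h
  proof -
    have "h \<in> Q" using \<open>Q = carrier G\<close> that by simp
    then show ?thesis using that by (simp add: Q_def)
  qed
  then have "shadows G \<Phi> \<epsilon> y (\<xi> \<one>)"
    using \<xi>_close by (simp add: shadows_def)
  then show ?thesis ..
qed

lemma shadowing_on_if_cyclic:
  assumes S: "symmetric_gen_set G S"
    and uc: "\<And>a. a \<in> carrier G \<Longrightarrow> uniformly_continuous_on UNIV (\<Phi> a)"
    and g: "g \<in> carrier G"
    and TA: "top_anosov integer_group (\<lambda>k. \<Phi> (g [^] k)) {1, -1} U V"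
    and F: "finite F" "conjugation_test_set G g F"
  shows "shadowing_on G \<Phi> S V"
  unfolding shadowing_on_iff_shadows
proof (intro allI impI)
  fix \<epsilon> :: real assume "\<epsilon> > 0"
  let ?\<phi> = "\<lambda>k::int. \<Phi> (g [^] k)"
  obtain \<gamma> where "\<gamma> > 0" "(\<Union>x\<in>V. ball x \<gamma>) \<subseteq> U"
    and sh: "shadowing_on integer_group ?\<phi> {1, -1} V" and exp: "expansive_on integer_group ?\<phi> U"
    using TA by (auto simp: top_anosov_def)
  obtain r where "r > 0" and unique: "\<And>z p q. \<forall>k\<in>carrier integer_group. z k \<in> V
      \<Longrightarrow> shadows integer_group ?\<phi> r z p \<Longrightarrow> shadows integer_group ?\<phi> r z q \<Longrightarrow> p = q"
    by (rule expansive_on_shadows_unique[OF exp \<open>(\<Union>x\<in>V. ball x \<gamma>) \<subseteq> U\<close> \<open>\<gamma> > 0\<close>])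
      (simp_all add: g)
  have "\<exists>\<rho>>0. \<forall>a\<in>F. \<forall>x x'. dist x' x < \<rho> \<longrightarrow> dist (\<Phi> a x') (\<Phi> a x) < r/2"
  proof (rule finite_common_pos_bound[OF F(1)])
    show "\<exists>\<rho>>0. \<forall>x x'. dist x' x < \<rho> \<longrightarrow> dist (\<Phi> a x') (\<Phi> a x) < r/2" if "a \<in> F" for a
      using uc[of a] that F(2) \<open>r > 0\<close> unfolding uniformly_continuous_on_def conjugation_test_set_def
      by (meson UNIV_I half_gt_zero subsetD)
  qed (meson less_le_trans)
  then obtain \<rho> where "\<rho> > 0" and F_cont: "\<forall>a\<in>F. \<forall>x x'. dist x' x < \<rho> \<longrightarrow> dist (\<Phi> a x') (\<Phi> a x) < r/2"
    by blast
  define \<epsilon>' where "\<epsilon>' = min \<epsilon> (min r \<rho>)"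
  have "\<epsilon>' > 0" using \<open>\<epsilon> > 0\<close> \<open>r > 0\<close> \<open>\<rho> > 0\<close> by (simp add: \<epsilon>'_def)
  then obtain d where "d > 0" and shZ: "\<forall>z. pseudotrajectory integer_group ?\<phi> {1, -1} d z
      \<and> (\<forall>k\<in>carrier integer_group. z k \<in> V) \<longrightarrow> (\<exists>x. shadows integer_group ?\<phi> \<epsilon>' z x)"
    using sh unfolding shadowing_on_iff_shadows by blast
  have "finite ({g, inv g} \<union> F)" "{g, inv g} \<union> F \<subseteq> carrier G" "min d (r/2) > 0"
    using F g \<open>d > 0\<close> \<open>r > 0\<close> by (auto simp: conjugation_test_set_def)
  from pseudotrajectory_step_close_finite[OF S uc this] obtain \<delta> where "\<delta> > 0"
    and \<delta>: "\<And>y. pseudotrajectory G \<Phi> S \<delta> y \<Longrightarrow> \<forall>a\<in>{g, inv g} \<union> F. step_close G \<Phi> a (min d (r/2)) y"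
    by blast
  have "\<exists>x. shadows G \<Phi> \<epsilon>' y x"
    if y: "pseudotrajectory G \<Phi> S \<delta> y" and yV: "\<forall>h\<in>carrier G. y h \<in> V" for y
  proof (rule shadows_from_orbit_shadows[OF g F(2)])
    have steps: "step_close G \<Phi> a \<eta> y" if "a \<in> {g, inv g} \<union> F" "min d (r/2) \<le> \<eta>" for a \<eta>
      using step_close_mono[OF bspec[OF \<delta>[OF y] that(1)] that(2)] .
    show "\<epsilon>' \<le> r" by (simp add: \<epsilon>'_def)
    show "p = q" if "h \<in> carrier G" "shadows integer_group ?\<phi> r (\<lambda>k. y (g [^] k \<otimes> h)) p"
      "shadows integer_group ?\<phi> r (\<lambda>k. y (g [^] k \<otimes> h)) q" for h p q
      using unique[OF _ that(2,3)] yV g that(1) by simp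
    show "\<exists>x. shadows integer_group ?\<phi> \<epsilon>' (\<lambda>k. y (g [^] k \<otimes> h)) x" if "h \<in> carrier G" for h
      using shZ cyclic_pseudotrajectory[OF g that steps steps] yV g that by simp
    show "step_close G \<Phi> a (r/2) y" if "a \<in> F" for a
      using steps that by simp
    show "dist (\<Phi> a x') (\<Phi> a x) < r/2" if "a \<in> F" "dist x' x < \<epsilon>'" for a x x'
      using F_cont that by (simp add: \<epsilon>'_def)
  qed
  moreover have "\<epsilon>' \<le> \<epsilon>" by (simp add: \<epsilon>'_def)
  ultimately show "\<exists>\<delta>>0. \<forall>y. pseudotrajectory G \<Phi> S \<delta> y \<and> (\<forall>h\<in>carrier G. y h \<in> V) \<longrightarrow>
      (\<exists>x. shadows G \<Phi> \<epsilon> y x)"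
    using \<open>\<delta> > 0\<close> shadows_mono by blast
qed

lemma top_anosov_if_nilpotent:
  assumes nil: "lower_central G n = {\<one>}" and S: "symmetric_gen_set G S"
    and uc: "\<And>a. a \<in> carrier G \<Longrightarrow> uniformly_continuous_on UNIV (\<Phi> a)"
    and g: "g \<in> carrier G" and "top_anosov_homeo (\<Phi> g) U V"
  shows "top_anosov G \<Phi> S U V"
proof -
  have TA: "top_anosov integer_group (\<lambda>k. \<Phi> (g [^] k)) {1, -1} U V"
    using assms(5) g by (simp add: top_anosov_homeo_def int_iter_act)
  have "finite S" "S \<subseteq> carrier G" "generate G S = carrier G"
    using S by (simp_all add: symmetric_gen_set_def)
  then obtain F where "finite F" "conjugation_test_set G g F"
    using nilpotent_ex_conjugation_test_set[OF nil _ _ _ g] by blast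
  with S uc g TA have "shadowing_on G \<Phi> S V" by (rule shadowing_on_if_cyclic)
  moreover have "expansive_on G \<Phi> U"
    using TA expansive_on_if_cyclic[OF g] by (simp add: top_anosov_def)
  ultimately show ?thesis using TA by (simp add: top_anosov_def)
qed

end

theorem lemma2:
  fixes G :: "('a, 'm) monoid_scheme"
    and \<Phi> :: "'a \<Rightarrow> 'b::metric_space \<Rightarrow> 'b"
    and S :: "'a set" and U V :: "'b set"
  assumes "nilpotent_group G"
    and "finitely_generated G"
    and "unif_cont_action G \<Phi>"
    and "symmetric_gen_set G S"
    and "\<exists>g\<in>carrier G. top_anosov_homeo (\<Phi> g) U V"
  shows "top_anosov G \<Phi> S U V"
proof -
  obtain n where "group G" and nil: "lower_central G n = {\<one>\<^bsub>G\<^esub>}"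
    using assms(1) by (auto simp: nilpotent_group_def)
  interpret homeo_action G \<Phi>
    using \<open>group G\<close> assms(3) by (simp add: homeo_action_def homeo_action_axioms_def unif_cont_action_def)
  have uc: "\<And>a. a \<in> carrier G \<Longrightarrow> uniformly_continuous_on UNIV (\<Phi> a)"
    using assms(3) uniformly_continuous_act by (auto simp: unif_cont_action_def)
  from assms(5) show ?thesis
    using top_anosov_if_nilpotent[OF nil assms(4) uc] by blast
qed

end
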